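(* Let $\mathbb{F}$ be a field and $n\ge2$. Let $\mathcal{A}$ be a nonempty set of $(n-1)$-dimensional subspaces of $\mathbb{F}^n$ and $\mathcal{B}$ a nonempty set of $1$-dimensional subspaces of $\mathbb{F}^n$ such that $V_1\not\subseteq V_2$ for all $V_1\in\mathcal{B}$ and $V_2\in\mathcal{A}$. Then $S(\mathcal{A},\mathcal{B})=\{A\in M(n,\mathbb{F}) : \mathrm{Im}(A)\in\mathcal{A},\ \ker(A)\in\mathcal{B}\}$ is an isolated subsemigroup of $M(n,\mathbb{F})$.
   Context: $M(n,\mathbb{F})$ is the semigroup of $n\times n$ matrices over $\mathbb{F}$ under multiplication, identified with linear operators on $\mathbb{F}^n$. A subsemigroup $T$ of a semigroup $S$ is isolated if for all $x\in S$ and all positive integers $m$, $x^m\in T$ implies $x\in T$. *)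

theory Defs
  imports "HOL-Analysis.Analysis"
begin

definition mat_pow :: "'a::semiring_1^'n^'n \<Rightarrow> nat \<Rightarrow> 'a^'n^'n" where
  "mat_pow X m = (((**) X) ^^ m) (mat 1)"

definition img :: "'a::semiring_1^'n^'n \<Rightarrow> ('a^'n) set" where
  "img A = range (\<lambda>x. A *v x)"

definition ker :: "'a::semiring_1^'n^'n \<Rightarrow> ('a^'n) set" where
  "ker A = {x. A *v x = 0}"

definition matrix_subsemigroup :: "('a::semiring_1^'n^'n) set \<Rightarrow> bool" where
  "matrix_subsemigroup T \<longleftrightarrow> T \<noteq> {} \<and> (\<forall>A\<in>T. \<forall>B\<in>T. A ** B \<in> T)"

definition isolated :: "('a::semiring_1^'n^'n) set \<Rightarrow> bool" where
  "isolated T \<longleftrightarrow> (\<forall>X. \<forall>m::nat. m > 0 \<longrightarrow> mat_pow X m \<in> T \<longrightarrow> X \<in> T)"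

definition S_AB :: "('a::field^'n) set set \<Rightarrow> ('a^'n) set set \<Rightarrow> ('a^'n^'n) set" where
  "S_AB \<A> \<B> = {A. img A \<in> \<A> \<and> ker A \<in> \<B>}"

end

theory Submission
  imports Defs
begin

text \<open>For A, B in S(\<A>,\<B>) the line ker A meets the hyperplane img B only in 0 and together
  with it spans F^n; hence multiplying B on the left by A keeps ker B, and multiplying A on the
  right by B keeps img A. For isolation, ker X \<subseteq> ker X^m and img X^m \<subseteq> img X; a line has no
  nonzero proper subspace and a hyperplane no proper superspace other than F^n, and the extreme
  cases ker X = 0 or img X = F^n would propagate to X^m.\<close>

lemma dim_one_subspace_eq_span:
  fixes L :: "('a::field^'n) set"
  assumes "vec.subspace L" "vec.dim L = 1" "w \<in> L" "w \<noteq> 0"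
  shows "L = vec.span {w}"
proof -
  have "vec.span {w} \<subseteq> L" using assms by (intro vec.span_minimal) auto
  moreover have "vec.dim (vec.span {w}) = 1" using assms(4) by (simp add: vec.dim_span)
  ultimately show ?thesis using assms
    by (metis order_refl vec.subspace_dim_equal vec.subspace_span)
qed

lemma dim_one_subspace_eq:
  fixes L W :: "('a::field^'n) set"
  assumes "vec.subspace L" "vec.dim L = 1" "vec.subspace W" "W \<subseteq> L" "W \<noteq> {0}"
  shows "W = L"
proof -
  obtain w where "w \<in> W" "w \<noteq> 0" using assms(3,5) vec.subspace_0 by blast
  then have "L = vec.span {w}" using assms by (intro dim_one_subspace_eq_span) auto
  also have "\<dots> \<subseteq> W" using \<open>w \<in> W\<close> assms(3) by (intro vec.span_minimal) auto
  finally show ?thesis using assms(4) by blast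
qed

lemma dim_one_subspace_inter_eq_zero:
  fixes L H :: "('a::field^'n) set"
  assumes "vec.subspace L" "vec.dim L = 1" "vec.subspace H" "\<not> L \<subseteq> H"
  shows "L \<inter> H = {0}"
proof (rule ccontr)
  assume "L \<inter> H \<noteq> {0}"
  then have "L \<inter> H = L"
    using assms by (intro dim_one_subspace_eq) (auto intro: vec.subspace_inter)
  with assms(4) show False by blast
qed

lemma hyperplane_superset_eq:
  fixes H W :: "('a::field^'n) set"
  assumes "vec.subspace H" "vec.dim H = CARD('n) - 1" "vec.subspace W" "H \<subseteq> W" "W \<noteq> UNIV"
  shows "W = H"
proof (rule ccontr)
  assume "W \<noteq> H"
  then have "vec.span H \<subset> vec.span W" using assms by (simp add: vec.span_eq_iff[THEN iffD2] psubset_eq)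
  then have "vec.dim H < vec.dim W" by (rule vec.dim_psubset)
  then have "vec.dim (UNIV :: ('a^'n) set) \<le> vec.dim W"
    using assms(2) vec_dim_card[where 'a='a and 'n='n] by linarith
  then show False using assms(3,5) by (metis subset_UNIV vec.subspace_UNIV vec.subspace_dim_equal)
qed

lemma hyperplane_add_subspace:
  fixes H L :: "('a::field^'n) set"
  assumes "vec.subspace H" "vec.dim H = CARD('n) - 1" "vec.subspace L" "\<not> L \<subseteq> H"
  shows "\<exists>h\<in>H. x - h \<in> L"
proof -
  obtain v where v: "v \<in> L" "v \<notin> H" using assms(4) by blast
  have "vec.span (insert v H) = UNIV"
  proof (rule ccontr)
    assume "vec.span (insert v H) \<noteq> UNIV"
    then have "vec.span (insert v H) = H"
      using vec.span_superset[of "insert v H"] by (intro hyperplane_superset_eq[OF assms(1,2)]) auto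
    then show False using v(2) vec.span_superset[of "insert v H"] by blast
  qed
  then obtain k where "x - k *s v \<in> vec.span H" unfolding vec.span_insert by auto
  then have "x - k *s v \<in> H" using assms(1) by (simp add: vec.span_eq_iff[THEN iffD2])
  moreover have "x - (x - k *s v) \<in> L" using v(1) assms(3) by (simp add: vec.subspace_scale)
  ultimately show ?thesis by blast
qed

lemma subspace_ker: "vec.subspace (ker (A::'a::field^'n^'n))"
  unfolding ker_def by (rule vec.subspace_kernel)

lemma subspace_img: "vec.subspace (img (A::'a::field^'n^'n))"
  unfolding img_def using vec.subspace_image[OF vec.subspace_UNIV] by simp

lemma ker_subset_ker_mult: "ker B \<subseteq> ker (A ** B)"
  by (auto simp: ker_def matrix_vector_mul_assoc[symmetric])

lemma img_mult_subset_img: "img (A ** B) \<subseteq> img A"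
  by (auto simp: img_def matrix_vector_mul_assoc[symmetric])

lemma ker_mult_eq:
  fixes A B :: "'a::field^'n^'n"
  assumes "ker A \<inter> img B = {0}"
  shows "ker (A ** B) = ker B"
proof
  show "ker (A ** B) \<subseteq> ker B"
  proof
    fix x assume "x \<in> ker (A ** B)"
    then have "B *v x \<in> ker A \<inter> img B" by (simp add: ker_def img_def matrix_vector_mul_assoc)
    then show "x \<in> ker B" using assms by (auto simp: ker_def)
  qed
qed (rule ker_subset_ker_mult)

lemma img_mult_eq:
  fixes A B :: "'a::field^'n^'n"
  assumes "\<And>x. \<exists>b\<in>img B. x - b \<in> ker A"
  shows "img (A ** B) = img A"
proof
  show "img A \<subseteq> img (A ** B)"
  proof
    fix y assume "y \<in> img A"
    then obtain x where y: "y = A *v x" by (auto simp: img_def)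
    obtain z where "x - B *v z \<in> ker A" using assms[of x] by (auto simp: img_def)
    then have "y = (A ** B) *v z"
      by (simp add: y ker_def matrix_vector_mul_assoc matrix_vector_mult_diff_distrib)
    then show "y \<in> img (A ** B)" by (simp add: img_def)
  qed
qed (rule img_mult_subset_img)

lemma mat_pow_0: "mat_pow X 0 = mat 1"
  by (simp add: mat_pow_def)

lemma mat_pow_Suc: "mat_pow X (Suc m) = X ** mat_pow X m"
  by (simp add: mat_pow_def)

lemma mat_pow_Suc_right: "mat_pow X (Suc m) = mat_pow X m ** (X::'a::semiring_1^'n^'n)"
  by (induction m) (simp_all add: mat_pow_0 mat_pow_Suc matrix_mul_assoc)

lemma ker_mat_pow_eq_zero:
  fixes X :: "'a::field^'n^'n"
  assumes "ker X = {0}"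
  shows "ker (mat_pow X m) = {0}"
proof (induction m)
  case 0
  show ?case by (auto simp: mat_pow_0 ker_def)
next
  case (Suc m)
  have "ker X \<inter> img (mat_pow X m) = {0}"
    using assms subspace_img vec.subspace_0 by blast
  then show ?case using Suc.IH by (simp add: mat_pow_Suc ker_mult_eq)
qed

lemma img_mat_pow_eq_UNIV:
  fixes X :: "'a::field^'n^'n"
  assumes "img X = UNIV"
  shows "img (mat_pow X m) = UNIV"
proof (induction m)
  case 0
  show ?case by (auto simp: mat_pow_0 img_def intro: range_eqI[of _ _ id])
next
  case (Suc m)
  have "\<exists>b\<in>img X. x - b \<in> ker (mat_pow X m)" for x
    using assms by (intro bexI[of _ x]) (auto simp: ker_def)
  then show ?case using Suc.IH by (simp add: mat_pow_Suc_right img_mult_eq)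
qed

lemma S_AB_mult_closed:
  fixes \<A> \<B> :: "('a::field^'n) set set"
  assumes hyperplanes: "\<forall>V\<in>\<A>. vec.subspace V \<and> vec.dim V = CARD('n) - 1"
    and lines: "\<forall>V\<in>\<B>. vec.subspace V \<and> vec.dim V = 1"
    and transversal: "\<forall>V1\<in>\<B>. \<forall>V2\<in>\<A>. \<not> V1 \<subseteq> V2"
    and "A \<in> S_AB \<A> \<B>" "B \<in> S_AB \<A> \<B>"
  shows "A ** B \<in> S_AB \<A> \<B>"
proof -
  have A: "img A \<in> \<A>" "ker A \<in> \<B>" and B: "img B \<in> \<A>" "ker B \<in> \<B>"
    using assms(4,5) by (auto simp: S_AB_def)
  have "ker A \<inter> img B = {0}"
    using A B lines transversal subspace_img by (intro dim_one_subspace_inter_eq_zero) auto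
  then have "ker (A ** B) = ker B" by (rule ker_mult_eq)
  moreover have "img (A ** B) = img A"
    using A B hyperplanes transversal subspace_ker
    by (intro img_mult_eq hyperplane_add_subspace) auto
  ultimately show ?thesis using A B by (simp add: S_AB_def)
qed

lemma S_AB_isolated:
  fixes \<A> \<B> :: "('a::field^'n) set set"
  assumes hyperplanes: "\<forall>V\<in>\<A>. vec.subspace V \<and> vec.dim V = CARD('n) - 1"
    and lines: "\<forall>V\<in>\<B>. vec.subspace V \<and> vec.dim V = 1"
  shows "isolated (S_AB \<A> \<B>)"
  unfolding isolated_def
proof (intro allI impI)
  fix X :: "'a^'n^'n" and m :: nat
  assume "m > 0" and "mat_pow X m \<in> S_AB \<A> \<B>"
  then obtain k where m: "m = Suc k" and P: "mat_pow X m \<in> S_AB \<A> \<B>"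
    using gr0_implies_Suc by blast
  let ?P = "mat_pow X m"
  have img_P: "vec.subspace (img ?P)" "vec.dim (img ?P) = CARD('n) - 1"
    and ker_P: "vec.subspace (ker ?P)" "vec.dim (ker ?P) = 1"
    using P hyperplanes lines by (auto simp: S_AB_def)
  have "ker X \<noteq> {0}"
    using ker_P ker_mat_pow_eq_zero[of X m] by auto
  moreover have "ker X \<subseteq> ker ?P"
    unfolding m mat_pow_Suc_right by (rule ker_subset_ker_mult)
  ultimately have "ker X = ker ?P"
    using ker_P subspace_ker by (intro dim_one_subspace_eq) auto
  have "img X \<noteq> UNIV"
    using img_P img_mat_pow_eq_UNIV[of X m] vec_dim_card[where 'a='a and 'n='n]
    by (metis diff_less less_numeral_extra(1) less_irrefl zero_less_card_finite)
  moreover have "img ?P \<subseteq> img X"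
    unfolding m mat_pow_Suc by (rule img_mult_subset_img)
  ultimately have "img X = img ?P"
    using img_P subspace_img by (intro hyperplane_superset_eq) auto
  with \<open>ker X = ker ?P\<close> P show "X \<in> S_AB \<A> \<B>" by (simp add: S_AB_def)
qed

lemma exists_matrix_img_ker:
  fixes H L :: "('a::field^'n) set"
  assumes H: "vec.subspace H" "vec.dim H = CARD('n) - 1"
    and L: "vec.subspace L" "vec.dim L = 1" and "\<not> L \<subseteq> H"
  shows "\<exists>M::'a^'n^'n. img M = H \<and> ker M = L"
proof -
  obtain v where v: "v \<in> L" "v \<notin> H" using assms(5) by blast
  have "v \<noteq> 0" using v(2) H(1) vec.subspace_0 by blast
  with L v(1) have L_eq: "L = vec.span {v}" by (intro dim_one_subspace_eq_span)
  obtain BH where BH: "BH \<subseteq> H" "vec.independent BH" "H \<subseteq> vec.span BH"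
    by (rule vec.maximal_independent_subset)
  have span_BH: "vec.span BH = H" using BH(1,3) H(1) by (rule vec.span_subspace)
  have "v \<notin> BH" using BH(1) v(2) by blast
  have indep: "vec.independent (insert v BH)"
    using BH(2) span_BH v(2) by (intro vec.independent_insertI) auto
  \<comment> \<open>the projection onto H along L: identity on a basis of H, zero on v\<close>
  define g where "g = (\<lambda>b::'a^'n. if b = v then 0 else b)"
  define f where "f = vec.construct (insert v BH) g"
  define M where "M = matrix f"
  have lin_f: "Vector_Spaces.linear (*s) (*s) f" unfolding f_def by (rule vec.linear_construct[OF indep])
  have M_f: "M *v x = f x" for x unfolding M_def by (rule matrix_works[OF lin_f])
  have "g ` insert v BH = insert 0 BH" using \<open>v \<notin> BH\<close> by (auto simp: g_def)
  then have "img M = vec.span (insert 0 BH)"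
    unfolding img_def M_f f_def using vec.range_construct_eq_span[OF indep, of g] by simp
  then have img_M: "img M = H" by (simp add: span_BH)
  have "v \<in> ker M" using vec.construct_basis[OF indep, of v g] by (simp add: ker_def M_f f_def g_def)
  then have L_ker: "L \<subseteq> ker M" unfolding L_eq using subspace_ker by (intro vec.span_minimal) auto
  have "f b = id b" if "b \<in> BH" for b
    using vec.construct_basis[OF indep, of b g] that \<open>v \<notin> BH\<close> by (auto simp: f_def g_def)
  then have f_H: "f h = h" if "h \<in> H" for h
    using vec.linear_eq_on[OF lin_f vec.linear_id, of h BH] that span_BH by simp
  have "ker M \<subseteq> L"
  proof
    fix x assume "x \<in> ker M"
    obtain h where h: "h \<in> H" "x - h \<in> L" using hyperplane_add_subspace[OF H L(1) assms(5)] by blast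
    have "0 = M *v h + M *v (x - h)" using \<open>x \<in> ker M\<close> by (simp add: ker_def matrix_vector_mult_diff_distrib)
    also have "\<dots> = h" using h L_ker by (auto simp: M_f f_H ker_def)
    finally show "x \<in> L" using h by simp
  qed
  with img_M L_ker show ?thesis by blast
qed

theorem lemma26:
  fixes \<A> \<B> :: "('a::field^'n) set set"
  assumes "CARD('n) \<ge> 2"
    and "\<A> \<noteq> {}"
    and "\<forall>V\<in>\<A>. vec.subspace V \<and> vec.dim V = CARD('n) - 1"
    and "\<B> \<noteq> {}"
    and "\<forall>V\<in>\<B>. vec.subspace V \<and> vec.dim V = 1"
    and "\<forall>V1\<in>\<B>. \<forall>V2\<in>\<A>. \<not> V1 \<subseteq> V2"
  shows "matrix_subsemigroup (S_AB \<A> \<B>) \<and> isolated (S_AB \<A> \<B>)"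
proof -
  obtain H L where H: "H \<in> \<A>" and L: "L \<in> \<B>" using assms(2,4) by blast
  have "vec.subspace H" "vec.dim H = CARD('n) - 1" "vec.subspace L" "vec.dim L = 1" "\<not> L \<subseteq> H"
    using assms(3,5,6) H L by auto
  then obtain M :: "'a^'n^'n" where "img M = H" "ker M = L"
    using exists_matrix_img_ker by blast
  with H L have "S_AB \<A> \<B> \<noteq> {}" by (auto simp: S_AB_def)
  then show ?thesis
    unfolding matrix_subsemigroup_def
    using S_AB_mult_closed[OF assms(3,5,6)] S_AB_isolated[OF assms(3,5)] by blast
qed

end
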